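(* Let $L$ be an Abelian group, $\mathcal{B}$ an $L$-graded algebra, and $\psi,\psi'$ bilinear forms on $L$ with $\psi(a,b)+\psi(b,a)\equiv\psi'(a,b)+\psi'(b,a)\pmod 2$ for all $a,b\in L$. Let $V\subset\mathcal{B}$ be an $L$-graded subspace. Let $\mathfrak{g}$ be the Lie subalgebra generated by $V$ for the commutator bracket $[-,-]_\psi$ of the $\psi$-twisted multiplication, and $\mathfrak{g}'$ the Lie subalgebra generated by $V$ for the commutator bracket $[-,-]_{\psi'}$ of the $\psi'$-twisted multiplication. Then $\mathfrak{g}=\mathfrak{g}'$ as vector subspaces of $\mathcal{B}$.
   Context: For a bilinear form $\psi$ on $L$, the $\psi$-twisted multiplication on $\mathcal{B}$ is $m^\psi_{a,b}=(-1)^{\psi(a,b)}m_{a,b}$ on homogeneous elements of degrees $a,b$, and $[x,y]_\psi=m^\psi(x,y)-m^\psi(y,x)$. *)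

theory Defs
  imports Main "HOL.Vector_Spaces"
begin

definition sgnpow :: "int \<Rightarrow> 'k::field" where
  "sgnpow n = (if even n then 1 else -1)"

definition gsupp :: "('l \<Rightarrow> 'b \<Rightarrow> 'b::zero) \<Rightarrow> 'b \<Rightarrow> 'l set" where
  "gsupp pr x = {a. pr a x \<noteq> 0}"

text \<open>An L-graded (associative) k-algebra: B is a k-vector space (via scale) and a ring
  whose multiplication is k-bilinear; pr a is the projection onto the degree-a
  component of the direct sum decomposition B = (+)_a B_a, with B_a B_b \<subseteq> B_(a+b).\<close>
definition graded_algebra ::
  "('k::field \<Rightarrow> 'b::ring \<Rightarrow> 'b) \<Rightarrow> ('l::ab_group_add \<Rightarrow> 'b \<Rightarrow> 'b) \<Rightarrow> bool" where
  "graded_algebra scale pr \<longleftrightarrow>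
     vector_space scale \<and>
     (\<forall>c x y. scale c (x * y) = scale c x * y \<and> scale c (x * y) = x * scale c y) \<and>
     (\<forall>a. Vector_Spaces.linear scale scale (pr a)) \<and>
     (\<forall>x. finite (gsupp pr x) \<and> x = (\<Sum>a\<in>gsupp pr x. pr a x)) \<and>
     (\<forall>a b x. pr a (pr b x) = (if a = b then pr b x else 0)) \<and>
     (\<forall>a b x y. pr (a + b) (pr a x * pr b y) = pr a x * pr b y)"

definition bilinear_form :: "('l::ab_group_add \<Rightarrow> 'l \<Rightarrow> int) \<Rightarrow> bool" where
  "bilinear_form \<psi> \<longleftrightarrow> (\<forall>a b c. \<psi> (a + b) c = \<psi> a c + \<psi> b c \<and> \<psi> a (b + c) = \<psi> a b + \<psi> a c)"

definition twisted_mult ::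
  "('k::field \<Rightarrow> 'b::ring \<Rightarrow> 'b) \<Rightarrow> ('l \<Rightarrow> 'b \<Rightarrow> 'b) \<Rightarrow> ('l \<Rightarrow> 'l \<Rightarrow> int) \<Rightarrow> 'b \<Rightarrow> 'b \<Rightarrow> 'b" where
  "twisted_mult scale pr \<psi> x y =
     (\<Sum>a\<in>gsupp pr x. \<Sum>b\<in>gsupp pr y. scale (sgnpow (\<psi> a b)) (pr a x * pr b y))"

definition twisted_bracket ::
  "('k::field \<Rightarrow> 'b::ring \<Rightarrow> 'b) \<Rightarrow> ('l \<Rightarrow> 'b \<Rightarrow> 'b) \<Rightarrow> ('l \<Rightarrow> 'l \<Rightarrow> int) \<Rightarrow> 'b \<Rightarrow> 'b \<Rightarrow> 'b" where
  "twisted_bracket scale pr \<psi> x y =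
     twisted_mult scale pr \<psi> x y - twisted_mult scale pr \<psi> y x"

definition generated_lie_subalgebra ::
  "('k::field \<Rightarrow> 'b::ab_group_add \<Rightarrow> 'b) \<Rightarrow> ('b \<Rightarrow> 'b \<Rightarrow> 'b) \<Rightarrow> 'b set \<Rightarrow> 'b set" where
  "generated_lie_subalgebra scale br V =
     \<Inter>{S. V \<subseteq> S \<and> module.subspace scale S \<and> (\<forall>x\<in>S. \<forall>y\<in>S. br x y \<in> S)}"

end

theory Submission
  imports Defs
begin

text \<open>On homogeneous elements \<open>x, y\<close> of degrees \<open>a, b\<close> the two brackets differ only by
  signs: \<open>[x,y]\<^sub>\<psi> = (-1)\<^bsup>\<psi>(a,b) - \<psi>'(a,b)\<^esup> [x,y]\<^sub>\<psi>'\<close>, because the parity hypothesis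
  makes \<open>\<psi>(b,a) - \<psi>'(b,a)\<close> have the same parity as \<open>\<psi>(a,b) - \<psi>'(a,b)\<close>.
  Since \<open>V\<close> is graded, so is the Lie subalgebra it generates, and a bracket of two of its
  elements is the sum of the brackets of their homogeneous components. Hence
  \<open>\<gg>'\<close> is closed under \<open>[-,-]\<^sub>\<psi>\<close>, i.e. \<open>\<gg> \<subseteq> \<gg>'\<close>, and symmetrically.\<close>

lemma sgnpow_add: "sgnpow (m + n) = (sgnpow m * sgnpow n :: 'k::field)"
  by (simp add: sgnpow_def)

lemma sgnpow_eq_if_even_diff: "even (m - n) \<Longrightarrow> sgnpow m = (sgnpow n :: 'k::field)"
  by (auto simp: sgnpow_def)

lemma subspace_generated_lie_subalgebra:
  "vector_space scale \<Longrightarrow> module.subspace scale (generated_lie_subalgebra scale br V)"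
proof -
  assume "vector_space scale"
  then interpret vector_space scale .
  show ?thesis
    unfolding generated_lie_subalgebra_def by (rule subspace_Inter) blast
qed

lemma generated_lie_subalgebra_superset: "V \<subseteq> generated_lie_subalgebra scale br V"
  unfolding generated_lie_subalgebra_def by blast

lemma generated_lie_subalgebra_bracket_closed:
  "x \<in> generated_lie_subalgebra scale br V \<Longrightarrow> y \<in> generated_lie_subalgebra scale br V
    \<Longrightarrow> br x y \<in> generated_lie_subalgebra scale br V"
  unfolding generated_lie_subalgebra_def by blast

lemma generated_lie_subalgebra_minimal:
  "V \<subseteq> S \<Longrightarrow> module.subspace scale S \<Longrightarrow> (\<And>x y. x \<in> S \<Longrightarrow> y \<in> S \<Longrightarrow> br x y \<in> S)
    \<Longrightarrow> generated_lie_subalgebra scale br V \<subseteq> S"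
  unfolding generated_lie_subalgebra_def by blast

context
  fixes scale :: "'k::field \<Rightarrow> 'b::ring \<Rightarrow> 'b"
    and pr :: "'l::ab_group_add \<Rightarrow> 'b \<Rightarrow> 'b"
  assumes graded: "graded_algebra scale pr"
begin

lemma graded_vector_space: "vector_space scale"
  using graded by (simp add: graded_algebra_def)

lemma module_hom_pr: "module_hom scale scale (pr a)"
  using graded by (simp add: graded_algebra_def linear_iff_module_hom)

lemma pr_pr: "pr a (pr b x) = (if a = b then pr b x else 0)"
  using graded by (simp add: graded_algebra_def)

lemma pr_mult_pr: "pr (a + b) (pr a x * pr b y) = pr a x * pr b y"
  using graded by (simp add: graded_algebra_def)

lemma pr_pr_mult_pr: "pr c (pr a x * pr b y) = (if c = a + b then pr a x * pr b y else 0)"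
  by (metis pr_mult_pr pr_pr)

lemma gsupp_pr_subset: "gsupp pr (pr a x) \<subseteq> {a}"
  by (auto simp: gsupp_def pr_pr split: if_splits)

lemma twisted_mult_eq_sum_superset:
  assumes "finite A" "gsupp pr x \<subseteq> A" "finite B" "gsupp pr y \<subseteq> B"
  shows "twisted_mult scale pr \<psi> x y =
    (\<Sum>a\<in>A. \<Sum>b\<in>B. scale (sgnpow (\<psi> a b)) (pr a x * pr b y))"
proof -
  interpret vector_space scale by (rule graded_vector_space)
  have "twisted_mult scale pr \<psi> x y =
      (\<Sum>a\<in>gsupp pr x. \<Sum>b\<in>B. scale (sgnpow (\<psi> a b)) (pr a x * pr b y))"
    unfolding twisted_mult_def
    by (intro sum.cong refl sum.mono_neutral_left assms(3,4)) (auto simp: gsupp_def)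
  also have "\<dots> = (\<Sum>a\<in>A. \<Sum>b\<in>B. scale (sgnpow (\<psi> a b)) (pr a x * pr b y))"
    by (intro sum.mono_neutral_left assms(1,2)) (auto simp: gsupp_def)
  finally show ?thesis .
qed

lemma twisted_mult_homogeneous:
  "twisted_mult scale pr \<psi> (pr a x) (pr b y) = scale (sgnpow (\<psi> a b)) (pr a x * pr b y)"
  using twisted_mult_eq_sum_superset[of "{a}" "pr a x" "{b}" "pr b y" \<psi>] gsupp_pr_subset
  by (simp add: pr_pr)

lemma twisted_bracket_eq_sum_homogeneous:
  "twisted_bracket scale pr \<psi> x y =
    (\<Sum>a\<in>gsupp pr x. \<Sum>b\<in>gsupp pr y. twisted_bracket scale pr \<psi> (pr a x) (pr b y))"
proof -
  have "twisted_mult scale pr \<psi> y x =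
      (\<Sum>a\<in>gsupp pr x. \<Sum>b\<in>gsupp pr y. scale (sgnpow (\<psi> b a)) (pr b y * pr a x))"
    unfolding twisted_mult_def by (rule sum.swap)
  then show ?thesis
    unfolding twisted_bracket_def twisted_mult_homogeneous
    by (simp only: twisted_mult_def sum_subtractf)
qed

lemma pr_twisted_bracket:
  "pr c (twisted_bracket scale pr \<psi> x y) =
    (\<Sum>a\<in>gsupp pr x. \<Sum>b\<in>gsupp pr y.
      if c = a + b then twisted_bracket scale pr \<psi> (pr a x) (pr b y) else 0)"
proof -
  interpret module_hom scale scale "pr c" by (rule module_hom_pr)
  have "pr c (twisted_bracket scale pr \<psi> (pr a x) (pr b y)) =
      (if c = a + b then twisted_bracket scale pr \<psi> (pr a x) (pr b y) else 0)" for a b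
    unfolding twisted_bracket_def twisted_mult_homogeneous
    by (simp add: diff scale pr_pr_mult_pr add.commute)
  then show ?thesis
    by (subst twisted_bracket_eq_sum_homogeneous) (simp add: sum)
qed

lemma twisted_bracket_homogeneous_change_form:
  assumes "even (\<psi> a b + \<psi> b a - \<psi>' a b - \<psi>' b a)"
  shows "twisted_bracket scale pr \<psi> (pr a x) (pr b y) =
    scale (sgnpow (\<psi> a b - \<psi>' a b)) (twisted_bracket scale pr \<psi>' (pr a x) (pr b y))"
proof -
  interpret vector_space scale by (rule graded_vector_space)
  define s :: 'k where "s = sgnpow (\<psi> a b - \<psi>' a b)"
  have "sgnpow (\<psi> a b) = s * sgnpow (\<psi>' a b)"
    unfolding s_def by (metis sgnpow_add diff_add_cancel)
  moreover have "sgnpow (\<psi> b a) = s * sgnpow (\<psi>' b a)"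
  proof -
    have "sgnpow (\<psi> b a - \<psi>' b a) = s"
      unfolding s_def using assms by (intro sgnpow_eq_if_even_diff) presburger
    then show ?thesis by (metis sgnpow_add diff_add_cancel)
  qed
  ultimately show ?thesis
    unfolding twisted_bracket_def twisted_mult_homogeneous s_def[symmetric]
    by (simp add: scale_right_diff_distrib)
qed

lemma pr_mem_generated_lie_subalgebra:
  assumes V_graded: "\<And>a v. v \<in> V \<Longrightarrow> pr a v \<in> V"
    and x: "x \<in> generated_lie_subalgebra scale (twisted_bracket scale pr \<psi>) V"
  shows "pr c x \<in> generated_lie_subalgebra scale (twisted_bracket scale pr \<psi>) V"
proof -
  interpret vector_space scale by (rule graded_vector_space)
  let ?br = "twisted_bracket scale pr \<psi>"
  let ?G = "generated_lie_subalgebra scale ?br V"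
  have G: "subspace ?G"
    by (rule subspace_generated_lie_subalgebra[OF graded_vector_space])
  let ?S = "{x \<in> ?G. \<forall>c. pr c x \<in> ?G}"
  have "?G \<subseteq> ?S"
  proof (rule generated_lie_subalgebra_minimal)
    show "V \<subseteq> ?S"
      using generated_lie_subalgebra_superset V_graded by blast
    show "subspace ?S"
      using G
      by (auto simp: subspace_def module_hom.zero[OF module_hom_pr]
          module_hom.add[OF module_hom_pr] module_hom.scale[OF module_hom_pr])
    show "?br x y \<in> ?S" if "x \<in> ?S" "y \<in> ?S" for x y
      using that
      by (auto simp: pr_twisted_bracket subspace_0[OF G]
          intro!: generated_lie_subalgebra_bracket_closed subspace_sum[OF G])
  qed
  then show ?thesis using x by blast
qed

lemma generated_lie_subalgebra_twisted_subset:
  assumes parity: "\<And>a b. even (\<psi> a b + \<psi> b a - \<psi>' a b - \<psi>' b a)"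
    and V_graded: "\<And>a v. v \<in> V \<Longrightarrow> pr a v \<in> V"
  shows "generated_lie_subalgebra scale (twisted_bracket scale pr \<psi>) V \<subseteq>
    generated_lie_subalgebra scale (twisted_bracket scale pr \<psi>') V"
proof -
  interpret vector_space scale by (rule graded_vector_space)
  let ?G' = "generated_lie_subalgebra scale (twisted_bracket scale pr \<psi>') V"
  have G': "subspace ?G'"
    by (rule subspace_generated_lie_subalgebra[OF graded_vector_space])
  show ?thesis
  proof (rule generated_lie_subalgebra_minimal[OF generated_lie_subalgebra_superset G'])
    fix x y assume "x \<in> ?G'" "y \<in> ?G'"
    then have "twisted_bracket scale pr \<psi>' (pr a x) (pr b y) \<in> ?G'" for a b
      by (intro generated_lie_subalgebra_bracket_closed pr_mem_generated_lie_subalgebra V_graded)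
    then show "twisted_bracket scale pr \<psi> x y \<in> ?G'"
      by (subst twisted_bracket_eq_sum_homogeneous)
        (auto simp: twisted_bracket_homogeneous_change_form[where \<psi>=\<psi> and \<psi>'=\<psi>', OF parity]
          intro!: subspace_sum[OF G'] subspace_scale[OF G'])
  qed
qed

end

theorem lemma10p11:
  fixes scale :: "'k::field \<Rightarrow> 'b::ring \<Rightarrow> 'b"
    and pr :: "'l::ab_group_add \<Rightarrow> 'b \<Rightarrow> 'b"
    and \<psi> \<psi>' :: "'l \<Rightarrow> 'l \<Rightarrow> int"
    and V :: "'b set"
  assumes "graded_algebra scale pr"
    and "bilinear_form \<psi>" and "bilinear_form \<psi>'"
    and "\<And>a b. even (\<psi> a b + \<psi> b a - \<psi>' a b - \<psi>' b a)"
    and "module.subspace scale V"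
    and "\<And>a x. x \<in> V \<Longrightarrow> pr a x \<in> V"
  shows "generated_lie_subalgebra scale (twisted_bracket scale pr \<psi>) V =
         generated_lie_subalgebra scale (twisted_bracket scale pr \<psi>') V"
proof (rule subset_antisym)
  have parity_swapped: "even (\<psi>' a b + \<psi>' b a - \<psi> a b - \<psi> b a)" for a b
    using assms(4)[of a b] by presburger
  show "generated_lie_subalgebra scale (twisted_bracket scale pr \<psi>) V \<subseteq>
      generated_lie_subalgebra scale (twisted_bracket scale pr \<psi>') V"
    by (rule generated_lie_subalgebra_twisted_subset[OF assms(1,4,6)])
  show "generated_lie_subalgebra scale (twisted_bracket scale pr \<psi>') V \<subseteq>
      generated_lie_subalgebra scale (twisted_bracket scale pr \<psi>) V"
    by (rule generated_lie_subalgebra_twisted_subset[OF assms(1) parity_swapped assms(6)])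
qed

end
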